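(* Let $(\alpha,\beta)\in\mathcal{A}(K,L,T)$. Then operations (1) and (2) (defined in the context) are not both applicable to $(\alpha,\beta)$. Moreover, applying operation (1) twice in succession, first with index $i$ and then with index $i'$, yields the same degree table as applying it first with index $i'$ and then with index $i$; the same holds for operation (2).
   Context: A degree table with parameters $K,L,T$ is a tuple $(\alpha_{\mathrm p},\alpha_{\mathrm s},\beta_{\mathrm p},\beta_{\mathrm s})$ of nonnegative integer vectors of lengths $K,T,L,T$ such that, with $\alpha=(\alpha_{\mathrm p}\mid\alpha_{\mathrm s})$, $\beta=(\beta_{\mathrm p}\mid\beta_{\mathrm s})$: entries of $\alpha$ are distinct; entries of $\beta$ are distinct; every $n\in\operatorname{Set}(\alpha_{\mathrm p})+\operatorname{Set}(\beta_{\mathrm p})$ has a unique representation $n=i+j$ with $i\in\operatorname{Set}(\alpha)$, $j\in\operatorname{Set}(\beta)$; $\mathcal{A}(K,L,T)$ is the set of these. For such a table let $p$, $q$ be the entries of $\alpha$, $\beta$ sorted increasingly, $a=\min\operatorname{Set}(\alpha)$, $A=\max\operatorname{Set}(\alpha)$, $b=\min\operatorname{Set}(\beta)$, $B=\max\operatorname{Set}(\beta)$. Operation (1) with index $i$ ($1\le i<K+T$) is applicable if $p_i+B<(p_{i+1}-1)+b$ and replaces $\alpha$ by $\alpha'$ with $\alpha'_j=\alpha_j$ if $\alpha_j\le p_i$ and $\alpha'_j=\alpha_j-1$ otherwise. Operation (2) with index $i$ ($1\le i<L+T$) is applicable if $q_i+A<(q_{i+1}-1)+a$ and replaces $\beta$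 by $\beta'$ with $\beta'_j=\beta_j$ if $\beta_j\le q_i$ and $\beta'_j=\beta_j-1$ otherwise. An operation is applicable to a table if it is applicable with some index; indices refer to the sorted order of the current table. *)

theory Defs
  imports Main
begin

type_synonym table = "nat list \<times> nat list \<times> nat list \<times> nat list"

fun alpha :: "table \<Rightarrow> nat list" where
  "alpha (ap, as, bp, bs) = ap @ as"

fun beta :: "table \<Rightarrow> nat list" where
  "beta (ap, as, bp, bs) = bp @ bs"

fun degree_table :: "nat \<Rightarrow> nat \<Rightarrow> nat \<Rightarrow> table \<Rightarrow> bool" where
  "degree_table K L T (ap, as, bp, bs) \<longleftrightarrow>
     length ap = K \<and> length as = T \<and> length bp = L \<and> length bs = T \<and>
     distinct (ap @ as) \<and> distinct (bp @ bs) \<and>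
     (\<forall>n \<in> {i + j | i j. i \<in> set ap \<and> j \<in> set bp}.
        \<exists>!ij. fst ij \<in> set (ap @ as) \<and> snd ij \<in> set (bp @ bs) \<and> n = fst ij + snd ij)"

definition tables_A :: "nat \<Rightarrow> nat \<Rightarrow> nat \<Rightarrow> table set" ("\<A>") where
  "\<A> K L T = {t. degree_table K L T t}"

(* sorted entries; indices are 1-based as in the paper: p_i = p ! (i - 1) *)
definition pp :: "table \<Rightarrow> nat \<Rightarrow> nat" where
  "pp t i = sort (alpha t) ! (i - 1)"

definition qq :: "table \<Rightarrow> nat \<Rightarrow> nat" where
  "qq t i = sort (beta t) ! (i - 1)"

definition amin :: "table \<Rightarrow> nat" where "amin t = Min (set (alpha t))"
definition amax :: "table \<Rightarrow> nat" where "amax t = Max (set (alpha t))"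
definition bmin :: "table \<Rightarrow> nat" where "bmin t = Min (set (beta t))"
definition bmax :: "table \<Rightarrow> nat" where "bmax t = Max (set (beta t))"

definition op1_applicable :: "table \<Rightarrow> nat \<Rightarrow> bool" where
  "op1_applicable t i \<longleftrightarrow> 1 \<le> i \<and> i < length (alpha t) \<and>
     pp t i + bmax t < (pp t (i + 1) - 1) + bmin t"

definition op2_applicable :: "table \<Rightarrow> nat \<Rightarrow> bool" where
  "op2_applicable t i \<longleftrightarrow> 1 \<le> i \<and> i < length (beta t) \<and>
     qq t i + amax t < (qq t (i + 1) - 1) + amin t"

definition shift_down :: "nat \<Rightarrow> nat \<Rightarrow> nat" where
  "shift_down c x = (if x \<le> c then x else x - 1)"

fun op1 :: "nat \<Rightarrow> table \<Rightarrow> table" where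
  "op1 i (ap, as, bp, bs) =
     (let c = pp (ap, as, bp, bs) i in (map (shift_down c) ap, map (shift_down c) as, bp, bs))"

fun op2 :: "nat \<Rightarrow> table \<Rightarrow> table" where
  "op2 i (ap, as, bp, bs) =
     (let c = qq (ap, as, bp, bs) i in (ap, as, map (shift_down c) bp, map (shift_down c) bs))"

definition applicable1 :: "table \<Rightarrow> bool" where
  "applicable1 t \<longleftrightarrow> (\<exists>i. op1_applicable t i)"

definition applicable2 :: "table \<Rightarrow> bool" where
  "applicable2 t \<longleftrightarrow> (\<exists>i. op2_applicable t i)"

end

theory Submission
  imports Defs "HOL-Library.Multiset"
begin

text \<open>
  Operation (1) at index \<open>i\<close> needs \<open>p\<^sub>i + B < p\<^sub>i\<^sub>+\<^sub>1 - 1 + b\<close>, and since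
  \<open>a \<le> p\<^sub>i\<close>, \<open>p\<^sub>i\<^sub>+\<^sub>1 \<le> A\<close> this forces \<open>a + B < A + b\<close>; operation (2) symmetrically forces
  \<open>b + A < B + a\<close>, so they cannot both apply.

  Operation (1) applies the monotone map \<open>shift_down p\<^sub>i\<close> to \<open>\<alpha>\<close>, which commutes with
  sorting, so the new sorted entries are \<open>shift_down p\<^sub>i p\<^sub>j\<close>. Two such maps compose
  symmetrically, which gives the commutation. A gap \<open>(p\<^sub>j, p\<^sub>j\<^sub>+\<^sub>1)\<close> with \<open>j \<noteq> i\<close> lies
  entirely below or entirely above the threshold \<open>p\<^sub>i\<close>, so it is either untouched or
  translated by \<open>-1\<close>; hence closing the \<open>i\<close>-th gap does not change applicability at any
  other index. Operation (2) is operation (1) on the table with \<open>\<alpha>\<close> and \<open>\<beta>\<close> swapped.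
  Of the degree-table conditions only the distinctness of the entries is needed.
\<close>

lemma mono_shift_down: "mono (shift_down c)"
  by (auto simp: mono_def shift_down_def)

lemma shift_down_shift_down_commute:
  "shift_down (shift_down c d) (shift_down c x) = shift_down (shift_down d c) (shift_down d x)"
  by (auto simp: shift_down_def)

lemma shift_down_gap_iff:
  fixes x y c B b :: nat
  assumes "x < y" and "y \<le> c \<or> c < x"
  shows "shift_down c x + B < shift_down c y - 1 + b \<longleftrightarrow> x + B < y - 1 + b"
  using assms by (auto simp: shift_down_def)

lemma sort_map_mono:
  fixes xs :: "'a::linorder list" and f :: "'a \<Rightarrow> 'b::linorder"
  assumes "mono f"
  shows "sort (map f xs) = map f (sort xs)"
proof (rule properties_for_sort)
  show "mset (map f (sort xs)) = mset (map f xs)"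
    by simp
  show "sorted (map f (sort xs))"
    using assms by (auto simp: sorted_map monoD intro: sorted_wrt_mono_rel[OF _ sorted_sort])
qed

lemma alpha_op1: "alpha (op1 i t) = map (shift_down (pp t i)) (alpha t)"
  by (cases t) (simp add: Let_def)

lemma beta_op1: "beta (op1 i t) = beta t"
  by (cases t) (simp add: Let_def)

lemma bmax_op1: "bmax (op1 i t) = bmax t"
  by (simp add: bmax_def beta_op1)

lemma bmin_op1: "bmin (op1 i t) = bmin t"
  by (simp add: bmin_def beta_op1)

lemma pp_op1:
  assumes "j - 1 < length (alpha t)"
  shows "pp (op1 i t) j = shift_down (pp t i) (pp t j)"
  using assms by (simp add: pp_def alpha_op1 sort_map_mono mono_shift_down)

lemma pp_in_set:
  assumes "j - 1 < length (alpha t)"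
  shows "pp t j \<in> set (alpha t)"
  using assms unfolding pp_def by (metis length_sort nth_mem set_sort)

lemma pp_mono:
  assumes "j \<le> k" "k \<le> length (alpha t)"
  shows "pp t j \<le> pp t k"
  using assms by (cases "k = 0") (auto simp: pp_def intro: sorted_nth_mono)

lemma pp_strict_mono:
  assumes "distinct (alpha t)" and "1 \<le> j" "j < k" "k \<le> length (alpha t)"
  shows "pp t j < pp t k"
proof -
  have "sorted_wrt (<) (sort (alpha t))"
    using assms(1) by (simp add: strict_sorted_iff)
  then show ?thesis
    using assms(2-4) by (simp add: pp_def sorted_wrt_nth_less)
qed

lemma op1_commute:
  assumes "i - 1 < length (alpha t)" and "i' - 1 < length (alpha t)"
  shows "op1 i' (op1 i t) = op1 i (op1 i' t)"
proof (cases t)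
  case (fields ap as bp bs)
  have "pp (op1 i t) i' = shift_down (pp t i) (pp t i')"
    and "pp (op1 i' t) i = shift_down (pp t i') (pp t i)"
    using assms by (simp_all add: pp_op1)
  then show ?thesis
    using fields by (simp add: Let_def shift_down_shift_down_commute)
qed

lemma op1_applicable_op1_iff:
  assumes "distinct (alpha t)" and "1 \<le> i" "i < length (alpha t)" and "i' \<noteq> i"
  shows "op1_applicable (op1 i t) i' \<longleftrightarrow> op1_applicable t i'"
proof (cases "1 \<le> i' \<and> i' < length (alpha t)")
  case True
  have gap: "pp t i' < pp t (i' + 1)"
    using assms(1) True by (intro pp_strict_mono) auto
  have below_or_above: "pp t (i' + 1) \<le> pp t i \<or> pp t i < pp t i'"
  proof (cases "i' < i")
    case True
    then show ?thesis
      using assms(3) by (simp add: pp_mono)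
  next
    case False
    then show ?thesis
      using assms(1,2,4) True by (simp add: pp_strict_mono)
  qed
  have "op1_applicable (op1 i t) i' \<longleftrightarrow>
      shift_down (pp t i) (pp t i') + bmax t < shift_down (pp t i) (pp t (i' + 1)) - 1 + bmin t"
    using True by (auto simp: op1_applicable_def alpha_op1 pp_op1 bmax_op1 bmin_op1)
  also have "\<dots> \<longleftrightarrow> pp t i' + bmax t < pp t (i' + 1) - 1 + bmin t"
    using gap below_or_above by (rule shift_down_gap_iff)
  also have "\<dots> \<longleftrightarrow> op1_applicable t i'"
    using True by (simp add: op1_applicable_def)
  finally show ?thesis .
next
  case False
  then show ?thesis
    by (auto simp: op1_applicable_def alpha_op1)
qed

lemma op1_diamond:
  assumes "distinct (alpha t)" and "op1_applicable t i" and "op1_applicable (op1 i t) i'"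
  shows "op1_applicable t i' \<and> op1_applicable (op1 i' t) i \<and> op1 i' (op1 i t) = op1 i (op1 i' t)"
proof (cases "i' = i")
  case True
  then show ?thesis
    using assms(2,3) by simp
next
  case False
  have i: "1 \<le> i" "i < length (alpha t)"
    using assms(2) by (simp_all add: op1_applicable_def)
  then have "op1_applicable t i'"
    using op1_applicable_op1_iff[OF assms(1) i False] assms(3) by simp
  then have i': "1 \<le> i'" "i' < length (alpha t)"
    by (simp_all add: op1_applicable_def)
  have "op1_applicable (op1 i' t) i"
    using op1_applicable_op1_iff[OF assms(1) i'] False assms(2) by simp
  moreover have "op1 i' (op1 i t) = op1 i (op1 i' t)"
    using i i' by (intro op1_commute) auto
  ultimately show ?thesis
    using \<open>op1_applicable t i'\<close> by simp
qed

lemma op1_applicable_spread: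
  assumes "op1_applicable t i"
  shows "amin t + bmax t < amax t + bmin t"
proof -
  have "pp t i \<in> set (alpha t)" "pp t (i + 1) \<in> set (alpha t)"
    using assms by (auto simp: op1_applicable_def intro: pp_in_set)
  then have "amin t \<le> pp t i" "pp t (i + 1) \<le> amax t"
    by (simp_all add: amin_def amax_def)
  then show ?thesis
    using assms unfolding op1_applicable_def by linarith
qed

fun swap_table :: "table \<Rightarrow> table" where
  "swap_table (ap, as, bp, bs) = (bp, bs, ap, as)"

lemma alpha_swap_table: "alpha (swap_table t) = beta t"
  by (cases t) simp

lemma beta_swap_table: "beta (swap_table t) = alpha t"
  by (cases t) simp

lemma swap_table_swap_table [simp]: "swap_table (swap_table t) = t"
  by (cases t) simp

lemma op2_applicable_eq_op1_applicable_swap_table: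
  "op2_applicable t i \<longleftrightarrow> op1_applicable (swap_table t) i"
  by (simp add: op1_applicable_def op2_applicable_def pp_def qq_def amin_def amax_def bmin_def bmax_def
      alpha_swap_table beta_swap_table)

lemma op2_eq_swap_table_op1:
  "op2 i t = swap_table (op1 i (swap_table t))"
  by (cases t) (simp add: Let_def pp_def qq_def)

lemma op2_applicable_spread:
  assumes "op2_applicable t j"
  shows "bmin t + amax t < bmax t + amin t"
  using op1_applicable_spread[of "swap_table t" j] assms
  by (simp add: op2_applicable_eq_op1_applicable_swap_table amin_def amax_def bmin_def bmax_def
      alpha_swap_table beta_swap_table)

lemma op2_diamond:
  assumes "distinct (beta t)" and "op2_applicable t i" and "op2_applicable (op2 i t) i'"
  shows "op2_applicable t i' \<and> op2_applicable (op2 i' t) i \<and> op2 i' (op2 i t) = op2 i (op2 i' t)"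
  using op1_diamond[of "swap_table t" i i'] assms
  by (simp add: op2_applicable_eq_op1_applicable_swap_table op2_eq_swap_table_op1 alpha_swap_table)

theorem lemma5:
  fixes K L T :: nat and t :: table
  assumes "t \<in> \<A> K L T"
  shows "\<not> (applicable1 t \<and> applicable2 t) \<and>
    (\<forall>i i'. op1_applicable t i \<and> op1_applicable (op1 i t) i' \<longrightarrow>
            op1_applicable t i' \<and> op1_applicable (op1 i' t) i \<and>
            op1 i' (op1 i t) = op1 i (op1 i' t)) \<and>
    (\<forall>i i'. op2_applicable t i \<and> op2_applicable (op2 i t) i' \<longrightarrow>
            op2_applicable t i' \<and> op2_applicable (op2 i' t) i \<and>
            op2 i' (op2 i t) = op2 i (op2 i' t))"
proof -
  have "distinct (alpha t)" "distinct (beta t)"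
    using assms by (cases t, simp add: tables_A_def)+
  moreover have "\<not> (applicable1 t \<and> applicable2 t)"
    using op1_applicable_spread op2_applicable_spread
    unfolding applicable1_def applicable2_def by fastforce
  ultimately show ?thesis
    using op1_diamond op2_diamond by blast
qed

end
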